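(* Let $v$ be a typical weight, let $T:\mathcal{H}(\mathbb{D})\to\mathcal{H}(\mathbb{D})$ be a linear transformation, and let $X\subset\mathcal{H}(\mathbb{D})$ be a Banach space. For $z\in\mathbb{D}$ define the linear maps $(K_z^H)_T(f)=Tf(z)$, $(K_{z,1}^{\mathcal{B}})_T(f)=(Tf)'(z)$ on $X$, and $(K_0^{\mathcal{B}})_T(f)=Tf(0)$. Then: (i) $T:X\to H_{v,0}$ is bounded if and only if $(K_z^H)_T\in X^*$ for all $z\in\mathbb{D}$ and $v(z)(K_z^H)_T\to 0$ weak$^*$ in $X^*$ as $|z|\to1$. (ii) $T:X\to\mathcal{B}_{v,0}$ is bounded if and only if $(K_0^{\mathcal{B}})_T\in X^*$, $(K_{z,1}^{\mathcal{B}})_T\in X^*$ for all $z\in\mathbb{D}$, and $v(z)(K_{z,1}^{\mathcal{B}})_T\to 0$ weak$^*$ in $X^*$ as $|z|\to1$.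
   Context: $\mathbb{D}$ is the open unit disk, $\mathcal{H}(\mathbb{D})$ the holomorphic functions on $\mathbb{D}$. A weight is a continuous $v:\mathbb{D}\to(0,1]$; it is typical if it is radial ($v(z)=v(|z|)$), non-increasing in $|z|$, and $\lim_{|z|\to1}v(z)=0$. $H_v=\{f:\sup_z v(z)|f(z)|<\infty\}$ with norm $\sup_z v(z)|f(z)|$; $\mathcal{B}_v=\{f:\sup_z v(z)|f'(z)|<\infty\}$ with norm $|f(0)|+\sup_z v(z)|f'(z)|$. The little growth spaces are $H_{v,0}=\{f\in\mathcal{H}(\mathbb{D}):\lim_{|z|\to1}v(z)|f(z)|=0\}$ and $\mathcal{B}_{v,0}=\{f\in\mathcal{H}(\mathbb{D}):\lim_{|z|\to1}v(z)|f'(z)|=0\}$, closed subspaces of $H_v$, $\mathcal{B}_v$. $X^*$ is the dual of $X$. *)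

theory Defs
  imports "HOL-Complex_Analysis.Complex_Analysis"
begin

abbreviation disk :: "complex set" where "disk \<equiv> ball 0 1"

text \<open>H(D): holomorphic functions on the disk, represented canonically
  (value 0 outside the disk), so that function equality is equality on D.\<close>
definition HD :: "(complex \<Rightarrow> complex) set" where
  "HD = {f. f holomorphic_on disk \<and> (\<forall>z. 1 \<le> norm z \<longrightarrow> f z = 0)}"

definition typical_weight :: "(complex \<Rightarrow> real) \<Rightarrow> bool" where
  "typical_weight v \<longleftrightarrow>
     continuous_on disk v \<and>
     (\<forall>z\<in>disk. 0 < v z \<and> v z \<le> 1) \<and>
     (\<forall>z\<in>disk. \<forall>w\<in>disk. norm z = norm w \<longrightarrow> v z = v w) \<and>
     (\<forall>z\<in>disk. \<forall>w\<in>disk. norm z \<le> norm w \<longrightarrow> v w \<le> v z) \<and>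
     (\<forall>e>0. \<exists>r<1. \<forall>z. r < norm z \<longrightarrow> norm z < 1 \<longrightarrow> \<bar>v z\<bar> < e)"

definition vanishes_at_boundary :: "(complex \<Rightarrow> real) \<Rightarrow> bool" where
  "vanishes_at_boundary g \<longleftrightarrow>
     (\<forall>e>0. \<exists>r<1. \<forall>z. r < norm z \<longrightarrow> norm z < 1 \<longrightarrow> \<bar>g z\<bar> < e)"

definition Hv0 :: "(complex \<Rightarrow> real) \<Rightarrow> (complex \<Rightarrow> complex) set" where
  "Hv0 v = {f \<in> HD. vanishes_at_boundary (\<lambda>z. v z * norm (f z))}"

definition Bv0 :: "(complex \<Rightarrow> real) \<Rightarrow> (complex \<Rightarrow> complex) set" where
  "Bv0 v = {f \<in> HD. vanishes_at_boundary (\<lambda>z. v z * norm (deriv f z))}"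

definition linear_on_HD :: "((complex \<Rightarrow> complex) \<Rightarrow> (complex \<Rightarrow> complex)) \<Rightarrow> bool" where
  "linear_on_HD T \<longleftrightarrow> (\<forall>f\<in>HD. T f \<in> HD) \<and>
     (\<forall>f\<in>HD. \<forall>g\<in>HD. \<forall>a b::complex.
        T (\<lambda>z. a * f z + b * g z) = (\<lambda>z. a * T f z + b * T g z))"

definition banach_subspace :: "(complex \<Rightarrow> complex) set \<Rightarrow> ((complex \<Rightarrow> complex) \<Rightarrow> real) \<Rightarrow> bool" where
  "banach_subspace X N \<longleftrightarrow>
     X \<subseteq> HD \<and> (\<lambda>z. 0) \<in> X \<and>
     (\<forall>f\<in>X. \<forall>g\<in>X. \<forall>a b::complex. (\<lambda>z. a * f z + b * g z) \<in> X) \<and>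
     (\<forall>f\<in>X. 0 \<le> N f \<and> (N f = 0 \<longleftrightarrow> f = (\<lambda>z. 0))) \<and>
     (\<forall>f\<in>X. \<forall>a::complex. N (\<lambda>z. a * f z) = norm a * N f) \<and>
     (\<forall>f\<in>X. \<forall>g\<in>X. N (\<lambda>z. f z + g z) \<le> N f + N g) \<and>
     (\<forall>s. (\<forall>n. s n \<in> X) \<longrightarrow>
          (\<forall>e>0. \<exists>M. \<forall>m\<ge>M. \<forall>n\<ge>M. N (\<lambda>z. s m z - s n z) < e) \<longrightarrow>
          (\<exists>l\<in>X. (\<lambda>n. N (\<lambda>z. s n z - l z)) \<longlonglongrightarrow> 0))"

definition in_dual :: "(complex \<Rightarrow> complex) set \<Rightarrow> ((complex \<Rightarrow> complex) \<Rightarrow> real)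
    \<Rightarrow> ((complex \<Rightarrow> complex) \<Rightarrow> complex) \<Rightarrow> bool" where
  "in_dual X N L \<longleftrightarrow>
     (\<forall>f\<in>X. \<forall>g\<in>X. \<forall>a b::complex. L (\<lambda>z. a * f z + b * g z) = a * L f + b * L g) \<and>
     (\<exists>C. \<forall>f\<in>X. norm (L f) \<le> C * N f)"

text \<open>T : X \<rightarrow> H_{v,0} bounded (norm of H_v is sup_z v(z)|f(z)|).\<close>
definition bounded_into_Hv0 where
  "bounded_into_Hv0 v X N T \<longleftrightarrow> (\<forall>f\<in>X. T f \<in> Hv0 v) \<and>
     (\<exists>C. \<forall>f\<in>X. \<forall>z\<in>disk. v z * norm (T f z) \<le> C * N f)"

text \<open>T : X \<rightarrow> B_{v,0} bounded (norm of B_v is |f(0)| + sup_z v(z)|f'(z)|).\<close>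
definition bounded_into_Bv0 where
  "bounded_into_Bv0 v X N T \<longleftrightarrow> (\<forall>f\<in>X. T f \<in> Bv0 v) \<and>
     (\<exists>C. \<forall>f\<in>X. \<forall>z\<in>disk. norm (T f 0) + v z * norm (deriv (T f) z) \<le> C * N f)"

end

theory Submission
  imports Defs
begin

text \<open>Both parts are instances of the uniform boundedness principle on the Banach space X.
  For z in the disk the functionals f \<mapsto> v(z) (Tf)(z) (resp. v(z) (Tf)'(z)) are bounded by
  hypothesis, and for fixed f the function z \<mapsto> v(z)|Tf(z)| is continuous on the disk and tends
  to 0 at the boundary, hence bounded. Baire's theorem then bounds all these functionals
  uniformly, which is exactly the operator bound into H_v (resp. B_v); the converse direction
  just reads the operator bound at a single point and divides by v(z) > 0.\<close>

lemma banach_subspace_lincomb: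
  "banach_subspace X N \<Longrightarrow> f \<in> X \<Longrightarrow> g \<in> X \<Longrightarrow> (\<lambda>z. a * f z + b * g z) \<in> X"
  unfolding banach_subspace_def by blast

lemma banach_subspace_diff:
  assumes "banach_subspace X N" "f \<in> X" "g \<in> X"
  shows "(\<lambda>z. f z - g z) \<in> X"
  using banach_subspace_lincomb[OF assms, of 1 "-1"] by simp

lemma banach_subspace_zero: "banach_subspace X N \<Longrightarrow> (\<lambda>z. 0) \<in> X"
  unfolding banach_subspace_def by blast

lemma banach_subspace_norm_nonneg: "banach_subspace X N \<Longrightarrow> f \<in> X \<Longrightarrow> 0 \<le> N f"
  unfolding banach_subspace_def by blast

lemma banach_subspace_norm_eq_0:
  "banach_subspace X N \<Longrightarrow> f \<in> X \<Longrightarrow> N f = 0 \<longleftrightarrow> f = (\<lambda>z. 0)"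
  unfolding banach_subspace_def by blast

lemma banach_subspace_norm_scale:
  "banach_subspace X N \<Longrightarrow> f \<in> X \<Longrightarrow> N (\<lambda>z. a * f z) = norm a * N f"
  unfolding banach_subspace_def by blast

lemma banach_subspace_norm_triangle:
  "banach_subspace X N \<Longrightarrow> f \<in> X \<Longrightarrow> g \<in> X \<Longrightarrow> N (\<lambda>z. f z + g z) \<le> N f + N g"
  unfolding banach_subspace_def by blast

lemma banach_subspace_norm_diff_commute:
  assumes "banach_subspace X N" "f \<in> X" "g \<in> X"
  shows "N (\<lambda>z. f z - g z) = N (\<lambda>z. g z - f z)"
  using banach_subspace_norm_scale[OF assms(1) banach_subspace_diff[OF assms(1,3,2)], of "-1"]
  by simp

lemma banach_subspace_norm_diff_triangle:
  assumes "banach_subspace X N" "f \<in> X" "g \<in> X" "h \<in> X"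
  shows "N (\<lambda>z. f z - h z) \<le> N (\<lambda>z. f z - g z) + N (\<lambda>z. g z - h z)"
  using banach_subspace_norm_triangle[OF assms(1)
      banach_subspace_diff[OF assms(1,2,3)] banach_subspace_diff[OF assms(1,3,4)]]
  by simp

definition norm_dist ::
    "(complex \<Rightarrow> complex) set \<Rightarrow> ((complex \<Rightarrow> complex) \<Rightarrow> real)
      \<Rightarrow> (complex \<Rightarrow> complex) \<Rightarrow> (complex \<Rightarrow> complex) \<Rightarrow> real" where
  "norm_dist X N f g = (if f \<in> X \<and> g \<in> X then N (\<lambda>z. f z - g z) else 0)"

lemma banach_subspace_Metric_space:
  assumes bs: "banach_subspace X N"
  shows "Metric_space X (norm_dist X N)"
proof
  fix f g
  show "0 \<le> norm_dist X N f g"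
    using banach_subspace_norm_nonneg[OF bs banach_subspace_diff[OF bs]]
    by (simp add: norm_dist_def)
  show "norm_dist X N f g = norm_dist X N g f"
    using banach_subspace_norm_diff_commute[OF bs] by (auto simp: norm_dist_def)
next
  fix f g assume fg: "f \<in> X" "g \<in> X"
  have "(\<lambda>z. f z - g z) = (\<lambda>z. 0) \<longleftrightarrow> f = g"
    by (metis eq_iff_diff_eq_0 ext)
  then show "norm_dist X N f g = 0 \<longleftrightarrow> f = g"
    using banach_subspace_norm_eq_0[OF bs banach_subspace_diff[OF bs fg]] fg
    by (simp add: norm_dist_def)
next
  fix f g h assume "f \<in> X" "g \<in> X" "h \<in> X"
  then show "norm_dist X N f h \<le> norm_dist X N f g + norm_dist X N g h"
    using banach_subspace_norm_diff_triangle[OF bs] by (simp add: norm_dist_def)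
qed

lemma banach_subspace_mcomplete:
  assumes bs: "banach_subspace X N"
  shows "Metric_space.mcomplete X (norm_dist X N)"
proof -
  interpret Metric_space X "norm_dist X N"
    by (rule banach_subspace_Metric_space[OF bs])
  show ?thesis
    unfolding mcomplete_def
  proof (intro allI impI)
    fix s assume "MCauchy s"
    then have sX: "\<forall>n. s n \<in> X"
      and "\<forall>e>0. \<exists>M. \<forall>m\<ge>M. \<forall>n\<ge>M. norm_dist X N (s m) (s n) < e"
      unfolding MCauchy_def by auto
    then have "\<forall>e>0. \<exists>M. \<forall>m\<ge>M. \<forall>n\<ge>M. N (\<lambda>z. s m z - s n z) < e"
      by (simp add: norm_dist_def)
    then obtain l where l: "l \<in> X" "(\<lambda>n. N (\<lambda>z. s n z - l z)) \<longlonglongrightarrow> 0"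
      using bs sX unfolding banach_subspace_def by blast
    then have "(\<lambda>n. norm_dist X N (s n) l) \<longlonglongrightarrow> 0"
      using sX by (simp add: norm_dist_def)
    then show "\<exists>l. limitin mtopology s l sequentially"
      using l sX by (auto simp: limitin_metric_dist_null)
  qed
qed

lemma in_dual_linear:
  "in_dual X N L \<Longrightarrow> f \<in> X \<Longrightarrow> g \<in> X \<Longrightarrow> L (\<lambda>z. a * f z + b * g z) = a * L f + b * L g"
  unfolding in_dual_def by blast

lemma in_dual_diff:
  "in_dual X N L \<Longrightarrow> f \<in> X \<Longrightarrow> g \<in> X \<Longrightarrow> L (\<lambda>z. f z - g z) = L f - L g"
  using in_dual_linear[of X N L f g 1 "-1"] by simp

lemma in_dual_zero:
  assumes "banach_subspace X N" "in_dual X N L"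
  shows "L (\<lambda>z. 0) = 0"
  using in_dual_linear[OF assms(2) banach_subspace_zero[OF assms(1)]
      banach_subspace_zero[OF assms(1)], of 0 0]
  by simp

lemma in_dual_positive_bound:
  assumes bs: "banach_subspace X N" and L: "in_dual X N L"
  obtains C where "C > 0" "\<And>f. f \<in> X \<Longrightarrow> norm (L f) \<le> C * N f"
proof -
  obtain C where C: "\<forall>f\<in>X. norm (L f) \<le> C * N f"
    using L unfolding in_dual_def by blast
  have "norm (L f) \<le> (\<bar>C\<bar> + 1) * N f" if "f \<in> X" for f
  proof -
    have "C * N f \<le> (\<bar>C\<bar> + 1) * N f"
      by (intro mult_right_mono) (auto simp: banach_subspace_norm_nonneg[OF bs that])
    then show ?thesis using C that by force
  qed
  then show thesis using that[of "\<bar>C\<bar> + 1"] by simp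
qed

lemma closedin_dual_sublevel:
  assumes bs: "banach_subspace X N" and L: "\<And>i. i \<in> I \<Longrightarrow> in_dual X N (L i)"
  shows "closedin (Metric_space.mtopology X (norm_dist X N)) {f\<in>X. \<forall>i\<in>I. norm (L i f) \<le> c}"
proof -
  interpret Metric_space X "norm_dist X N"
    by (rule banach_subspace_Metric_space[OF bs])
  show ?thesis
    unfolding closedin_metric
  proof (intro conjI allI impI)
    fix f assume f: "f \<in> X - {f\<in>X. \<forall>i\<in>I. norm (L i f) \<le> c}"
    then obtain i where i: "i \<in> I" "norm (L i f) > c" by force
    obtain C where C: "C > 0" "\<And>g. g \<in> X \<Longrightarrow> norm (L i g) \<le> C * N g"
      using in_dual_positive_bound[OF bs L[OF i(1)]] by blast
    define r where "r = (norm (L i f) - c) / C"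
    have "norm (L i g) > c" if g: "g \<in> X" "N (\<lambda>z. f z - g z) < r" for g
    proof -
      have "norm (L i f) - norm (L i g) \<le> norm (L i (\<lambda>z. f z - g z))"
        using norm_triangle_ineq2 in_dual_diff[OF L[OF i(1)]] f g(1) by auto
      also have "\<dots> \<le> C * N (\<lambda>z. f z - g z)"
        using C(2) banach_subspace_diff[OF bs _ g(1)] f by blast
      also have "\<dots> < C * r" using g(2) C(1) by simp
      also have "\<dots> = norm (L i f) - c" unfolding r_def using C(1) by simp
      finally show ?thesis by simp
    qed
    then have "disjnt {f\<in>X. \<forall>i\<in>I. norm (L i f) \<le> c} (mball f r)"
      using i(1) unfolding disjnt_iff by (auto simp: norm_dist_def) (meson not_le)
    moreover have "r > 0" unfolding r_def using i C by simp
    ultimately show "\<exists>r>0. disjnt {f\<in>X. \<forall>i\<in>I. norm (L i f) \<le> c} (mball f r)" by blast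
  qed auto
qed

text \<open>If L is bounded by c on a ball of radius e, then the norm of L is at most 4c/e:
  rescale g into the half-radius ball and subtract the value at the centre.\<close>
lemma in_dual_bound_from_ball:
  assumes bs: "banach_subspace X N" and L: "in_dual X N L"
    and f0: "f0 \<in> X" and e: "e > 0"
    and ball: "\<And>h. h \<in> X \<Longrightarrow> N (\<lambda>z. h z - f0 z) < e \<Longrightarrow> norm (L h) \<le> c"
    and g: "g \<in> X"
  shows "norm (L g) \<le> (4 * c / e) * N g"
proof (cases "N g = 0")
  case True
  then show ?thesis
    using banach_subspace_norm_eq_0[OF bs g] in_dual_zero[OF bs L] by simp
next
  case False
  then have Ng: "N g > 0" using banach_subspace_norm_nonneg[OF bs g] by simp
  define t where "t = e / (2 * N g)"
  have t: "t > 0" unfolding t_def using Ng e by simp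
  define h where "h = (\<lambda>z. 1 * f0 z + complex_of_real t * g z)"
  have h: "h \<in> X" unfolding h_def by (rule banach_subspace_lincomb[OF bs f0 g])
  have "N (\<lambda>z. h z - f0 z) = t * N g"
    using banach_subspace_norm_scale[OF bs g, of "complex_of_real t"] t by (simp add: h_def)
  also have "\<dots> < e" unfolding t_def using Ng e by simp
  finally have Lh: "norm (L h) \<le> c" by (rule ball[OF h])
  have Lf0: "norm (L f0) \<le> c"
    using ball[OF f0] banach_subspace_norm_eq_0[OF bs banach_subspace_zero[OF bs]] e by simp
  have "t * norm (L g) = norm (L h - L f0)"
    using in_dual_linear[OF L f0 g, of 1 "complex_of_real t"] t
    by (simp add: h_def norm_mult)
  also have "\<dots> \<le> 2 * c" using norm_triangle_ineq4[of "L h" "L f0"] Lh Lf0 by linarith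
  finally show ?thesis
    using t Ng e by (simp add: t_def field_simps)
qed

theorem uniform_boundedness:
  assumes bs: "banach_subspace X N"
    and L: "\<And>i. i \<in> I \<Longrightarrow> in_dual X N (L i)"
    and pointwise: "\<And>f. f \<in> X \<Longrightarrow> \<exists>B. \<forall>i\<in>I. norm (L i f) \<le> B"
  shows "\<exists>C. \<forall>i\<in>I. \<forall>f\<in>X. norm (L i f) \<le> C * N f"
proof -
  interpret Metric_space X "norm_dist X N"
    by (rule banach_subspace_Metric_space[OF bs])
  define F where "F n = {f\<in>X. \<forall>i\<in>I. norm (L i f) \<le> real n}" for n :: nat
  have "X \<subseteq> \<Union>(range F)"
  proof
    fix f assume f: "f \<in> X"
    obtain B where "\<forall>i\<in>I. norm (L i f) \<le> B" using pointwise[OF f] by blast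
    moreover obtain n :: nat where "B \<le> real n" using real_arch_simple by blast
    ultimately have "f \<in> F n" using f unfolding F_def by force
    then show "f \<in> \<Union>(range F)" by blast
  qed
  then have cover: "\<Union>(range F) = X" unfolding F_def by auto
  have closed: "closedin mtopology (F n)" for n
    unfolding F_def by (rule closedin_dual_sublevel[OF bs L])
  have "\<exists>n. mtopology interior_of F n \<noteq> {}"
  proof (rule ccontr)
    assume "\<not> ?thesis"
    then have "mtopology interior_of \<Union>(range F) = {}"
      using metric_Baire_category_alt[OF banach_subspace_mcomplete[OF bs], of "range F"] closed
      by auto
    moreover have "mtopology interior_of X = X"
      by (metis topspace_mtopology interior_of_topspace)
    ultimately show False using cover banach_subspace_zero[OF bs] by auto
  qed
  then obtain n f0 e where f0: "f0 \<in> X" "e > 0" "mball f0 e \<subseteq> F n"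
    using in_interior_of_mball by blast
  have ball: "norm (L i h) \<le> real n"
    if "i \<in> I" "h \<in> X" "N (\<lambda>z. h z - f0 z) < e" for i h
  proof -
    have "h \<in> mball f0 e"
      using that(2,3) f0(1) banach_subspace_norm_diff_commute[OF bs f0(1) that(2)]
      by (simp add: norm_dist_def)
    then show ?thesis using f0(3) that(1) unfolding F_def by blast
  qed
  show ?thesis
    using in_dual_bound_from_ball[OF bs L f0(1,2) ball] by blast
qed

lemma continuous_vanishing_bounded:
  assumes "continuous_on disk g" and "vanishes_at_boundary g"
  shows "\<exists>B. \<forall>z\<in>disk. g z \<le> B"
proof -
  obtain r where r: "r < 1" "\<And>z. r < norm z \<Longrightarrow> norm z < 1 \<Longrightarrow> \<bar>g z\<bar> < 1"
    using assms(2) unfolding vanishes_at_boundary_def by (meson zero_less_one)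
  have "compact (g ` cball 0 r)"
    using r(1) by (intro compact_continuous_image continuous_on_subset[OF assms(1)]) auto
  then obtain B where B: "\<forall>x\<in>g ` cball 0 r. norm x \<le> B"
    using compact_imp_bounded bounded_iff by blast
  have "g z \<le> max B 1" if "z \<in> disk" for z
  proof (cases "norm z \<le> r")
    case True
    then have "norm (g z) \<le> B" using B by auto
    then show ?thesis by auto
  next
    case False
    then show ?thesis using r(2)[of z] that by auto
  qed
  then show ?thesis by blast
qed

lemma typical_weight_continuous: "typical_weight v \<Longrightarrow> continuous_on disk v"
  unfolding typical_weight_def by blast

lemma typical_weight_pos: "typical_weight v \<Longrightarrow> z \<in> disk \<Longrightarrow> 0 < v z"
  unfolding typical_weight_def by blast

lemma in_dual_if_weighted_bound:
  assumes "\<forall>f\<in>X. \<forall>g\<in>X. \<forall>a b. L (\<lambda>z. a * f z + b * g z) = a * L f + b * L g"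
    and "w > 0" and "\<And>f. f \<in> X \<Longrightarrow> w * norm (L f) \<le> C * N f"
  shows "in_dual X N L"
proof -
  have "norm (L f) \<le> (C / w) * N f" if "f \<in> X" for f
    using assms(2) assms(3)[OF that] by (simp add: field_simps)
  then show ?thesis using assms(1) unfolding in_dual_def by blast
qed

lemma weighted_evaluations_uniformly_bounded:
  assumes bs: "banach_subspace X N" and v: "typical_weight v"
    and dual: "\<And>z. z \<in> disk \<Longrightarrow> in_dual X N (\<lambda>f. S f z)"
    and vanish: "\<And>f. f \<in> X \<Longrightarrow> vanishes_at_boundary (\<lambda>z. v z * norm (S f z))"
    and cont: "\<And>f. f \<in> X \<Longrightarrow> continuous_on disk (S f)"
  shows "\<exists>C. \<forall>z\<in>disk. \<forall>f\<in>X. v z * norm (S f z) \<le> C * N f"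
proof -
  define L where "L z f = complex_of_real (v z) * S f z" for z f
  have norm_L: "norm (L z f) = v z * norm (S f z)" if "z \<in> disk" for z f
    unfolding L_def using typical_weight_pos[OF v that] by (simp add: norm_mult)
  have "\<exists>C. \<forall>z\<in>disk. \<forall>f\<in>X. norm (L z f) \<le> C * N f"
  proof (rule uniform_boundedness[OF bs])
    fix z assume z: "z \<in> disk"
    obtain C where C: "\<forall>f\<in>X. norm (S f z) \<le> C * N f"
      using dual[OF z] unfolding in_dual_def by blast
    have "norm (L z f) \<le> (v z * C) * N f" if "f \<in> X" for f
      using mult_left_mono[OF C[rule_format, OF that], of "v z"] typical_weight_pos[OF v z]
      by (simp add: norm_L[OF z])
    moreover have "\<forall>f\<in>X. \<forall>g\<in>X. \<forall>a b. L z (\<lambda>w. a * f w + b * g w) = a * L z f + b * L z g"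
      using in_dual_linear[OF dual[OF z]] by (simp add: L_def algebra_simps)
    ultimately show "in_dual X N (L z)" unfolding in_dual_def by blast
  next
    fix f assume f: "f \<in> X"
    have "continuous_on disk (\<lambda>z. v z * norm (S f z))"
      by (intro continuous_on_mult typical_weight_continuous[OF v] continuous_on_norm cont f)
    then obtain B where "\<forall>z\<in>disk. v z * norm (S f z) \<le> B"
      using continuous_vanishing_bounded vanish[OF f] by blast
    then show "\<exists>B. \<forall>z\<in>disk. norm (L z f) \<le> B" using norm_L by auto
  qed
  then show ?thesis using norm_L by auto
qed

lemma linear_on_HD_image:
  "linear_on_HD T \<Longrightarrow> f \<in> HD \<Longrightarrow> T f \<in> HD"
  unfolding linear_on_HD_def by blast

lemma linear_on_HD_holomorphic:
  "linear_on_HD T \<Longrightarrow> f \<in> HD \<Longrightarrow> T f holomorphic_on disk"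
  unfolding linear_on_HD_def HD_def by blast

lemma linear_on_HD_continuous:
  "linear_on_HD T \<Longrightarrow> f \<in> HD \<Longrightarrow> continuous_on disk (T f)"
  by (rule holomorphic_on_imp_continuous_on[OF linear_on_HD_holomorphic])

lemma linear_on_HD_continuous_deriv:
  "linear_on_HD T \<Longrightarrow> f \<in> HD \<Longrightarrow> continuous_on disk (deriv (T f))"
  by (rule holomorphic_on_imp_continuous_on[OF holomorphic_deriv[OF linear_on_HD_holomorphic open_ball]])

lemma linear_on_HD_eval:
  "linear_on_HD T \<Longrightarrow> f \<in> HD \<Longrightarrow> g \<in> HD \<Longrightarrow>
    T (\<lambda>w. a * f w + b * g w) z = a * T f z + b * T g z"
  unfolding linear_on_HD_def by simp

lemma linear_on_HD_deriv:
  assumes T: "linear_on_HD T" and f: "f \<in> HD" and g: "g \<in> HD" and z: "z \<in> disk"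
  shows "deriv (T (\<lambda>w. a * f w + b * g w)) z = a * deriv (T f) z + b * deriv (T g) z"
proof -
  have diff: "T h field_differentiable at z" if "h \<in> HD" for h
    using holomorphic_on_imp_differentiable_at[OF linear_on_HD_holomorphic[OF T that] _ z] by simp
  have "T (\<lambda>w. a * f w + b * g w) = (\<lambda>w. a * T f w + b * T g w)"
    using T f g unfolding linear_on_HD_def by blast
  moreover have "deriv (\<lambda>w. a * T f w + b * T g w) z = a * deriv (T f) z + b * deriv (T g) z"
    using diff[OF f] diff[OF g]
    by (simp add: deriv_add deriv_cmult field_differentiable_mult field_differentiable_const)
  ultimately show ?thesis by simp
qed

lemma bounded_into_Hv0_iff:
  assumes v: "typical_weight v" and T: "linear_on_HD T" and bs: "banach_subspace X N"
  shows "bounded_into_Hv0 v X N T \<longleftrightarrow>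
           (\<forall>z\<in>disk. in_dual X N (\<lambda>f. T f z)) \<and>
           (\<forall>f\<in>X. vanishes_at_boundary (\<lambda>z. v z * norm (T f z)))"
proof -
  have XHD: "X \<subseteq> HD" using bs unfolding banach_subspace_def by blast
  have lin: "\<forall>f\<in>X. \<forall>g\<in>X. \<forall>a b. T (\<lambda>w. a * f w + b * g w) z = a * T f z + b * T g z" for z
    using linear_on_HD_eval[OF T] XHD by blast
  show ?thesis
  proof
    assume H: "bounded_into_Hv0 v X N T"
    then obtain C where "\<forall>f\<in>X. \<forall>z\<in>disk. v z * norm (T f z) \<le> C * N f"
      unfolding bounded_into_Hv0_def by blast
    then have "in_dual X N (\<lambda>f. T f z)" if "z \<in> disk" for z
      using in_dual_if_weighted_bound[OF lin typical_weight_pos[OF v that]] that by blast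
    then show "(\<forall>z\<in>disk. in_dual X N (\<lambda>f. T f z)) \<and>
           (\<forall>f\<in>X. vanishes_at_boundary (\<lambda>z. v z * norm (T f z)))"
      using H unfolding bounded_into_Hv0_def Hv0_def by blast
  next
    assume A: "(\<forall>z\<in>disk. in_dual X N (\<lambda>f. T f z)) \<and>
           (\<forall>f\<in>X. vanishes_at_boundary (\<lambda>z. v z * norm (T f z)))"
    have "\<exists>C. \<forall>z\<in>disk. \<forall>f\<in>X. v z * norm (T f z) \<le> C * N f"
      using A XHD linear_on_HD_continuous[OF T]
      by (intro weighted_evaluations_uniformly_bounded[OF bs v]) auto
    then show "bounded_into_Hv0 v X N T"
      using A XHD linear_on_HD_image[OF T]
      unfolding bounded_into_Hv0_def Hv0_def by blast
  qed
qed

lemma bound_sum_iff: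
  fixes a :: "'f \<Rightarrow> real" and b :: "'f \<Rightarrow> 'z \<Rightarrow> real" and N :: "'f \<Rightarrow> real"
  assumes "\<And>f. 0 \<le> a f" and "\<And>f z. z \<in> Z \<Longrightarrow> 0 \<le> b f z" and "c \<in> Z"
  shows "(\<exists>C. \<forall>f\<in>X. \<forall>z\<in>Z. a f + b f z \<le> C * N f) \<longleftrightarrow>
           (\<exists>C. \<forall>f\<in>X. a f \<le> C * N f) \<and> (\<exists>C. \<forall>f\<in>X. \<forall>z\<in>Z. b f z \<le> C * N f)"
proof
  assume "\<exists>C. \<forall>f\<in>X. \<forall>z\<in>Z. a f + b f z \<le> C * N f"
  then obtain C where C: "\<And>f z. f \<in> X \<Longrightarrow> z \<in> Z \<Longrightarrow> a f + b f z \<le> C * N f" by blast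
  have "a f \<le> C * N f" if "f \<in> X" for f
    using C[OF that assms(3)] assms(2)[OF assms(3), of f] by linarith
  moreover have "b f z \<le> C * N f" if "f \<in> X" "z \<in> Z" for f z
    using C[OF that] assms(1)[of f] by linarith
  ultimately show "(\<exists>C. \<forall>f\<in>X. a f \<le> C * N f) \<and> (\<exists>C. \<forall>f\<in>X. \<forall>z\<in>Z. b f z \<le> C * N f)"
    by blast
next
  assume "(\<exists>C. \<forall>f\<in>X. a f \<le> C * N f) \<and> (\<exists>C. \<forall>f\<in>X. \<forall>z\<in>Z. b f z \<le> C * N f)"
  then obtain C0 C where "\<forall>f\<in>X. a f \<le> C0 * N f" "\<forall>f\<in>X. \<forall>z\<in>Z. b f z \<le> C * N f"
    by blast
  then have "\<forall>f\<in>X. \<forall>z\<in>Z. a f + b f z \<le> (C0 + C) * N f"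
    by (simp add: distrib_right add_mono)
  then show "\<exists>C. \<forall>f\<in>X. \<forall>z\<in>Z. a f + b f z \<le> C * N f" by blast
qed

lemma bounded_into_Bv0_iff:
  assumes v: "typical_weight v" and T: "linear_on_HD T" and bs: "banach_subspace X N"
  shows "bounded_into_Bv0 v X N T \<longleftrightarrow>
           in_dual X N (\<lambda>f. T f 0) \<and>
           (\<forall>z\<in>disk. in_dual X N (\<lambda>f. deriv (T f) z)) \<and>
           (\<forall>f\<in>X. vanishes_at_boundary (\<lambda>z. v z * norm (deriv (T f) z)))"
proof -
  have XHD: "X \<subseteq> HD" using bs unfolding banach_subspace_def by blast
  have lin0: "\<forall>f\<in>X. \<forall>g\<in>X. \<forall>a b. T (\<lambda>w. a * f w + b * g w) 0 = a * T f 0 + b * T g 0"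
    using linear_on_HD_eval[OF T] XHD by blast
  have lin: "\<forall>f\<in>X. \<forall>g\<in>X. \<forall>a b.
      deriv (T (\<lambda>w. a * f w + b * g w)) z = a * deriv (T f) z + b * deriv (T g) z"
    if "z \<in> disk" for z
    using linear_on_HD_deriv[OF T _ _ that] XHD by blast
  have bound_iff: "(\<exists>C. \<forall>f\<in>X. \<forall>z\<in>disk. norm (T f 0) + v z * norm (deriv (T f) z) \<le> C * N f)
      \<longleftrightarrow> in_dual X N (\<lambda>f. T f 0) \<and>
          (\<exists>C. \<forall>f\<in>X. \<forall>z\<in>disk. v z * norm (deriv (T f) z) \<le> C * N f)"
    using lin0 typical_weight_pos[OF v]
    by (subst bound_sum_iff[where c = 0]) (auto simp: in_dual_def less_imp_le)
  show ?thesis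
  proof
    assume H: "bounded_into_Bv0 v X N T"
    then obtain C where C: "\<forall>f\<in>X. \<forall>z\<in>disk. v z * norm (deriv (T f) z) \<le> C * N f"
      using bound_iff unfolding bounded_into_Bv0_def by blast
    have "in_dual X N (\<lambda>f. deriv (T f) z)" if z: "z \<in> disk" for z
      using in_dual_if_weighted_bound[OF lin[OF z] typical_weight_pos[OF v z]] C z by blast
    then show "in_dual X N (\<lambda>f. T f 0) \<and>
           (\<forall>z\<in>disk. in_dual X N (\<lambda>f. deriv (T f) z)) \<and>
           (\<forall>f\<in>X. vanishes_at_boundary (\<lambda>z. v z * norm (deriv (T f) z)))"
      using H bound_iff unfolding bounded_into_Bv0_def Bv0_def by blast
  next
    assume A: "in_dual X N (\<lambda>f. T f 0) \<and>
           (\<forall>z\<in>disk. in_dual X N (\<lambda>f. deriv (T f) z)) \<and>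
           (\<forall>f\<in>X. vanishes_at_boundary (\<lambda>z. v z * norm (deriv (T f) z)))"
    have "\<exists>C. \<forall>z\<in>disk. \<forall>f\<in>X. v z * norm (deriv (T f) z) \<le> C * N f"
      using A XHD linear_on_HD_continuous_deriv[OF T]
      by (intro weighted_evaluations_uniformly_bounded[OF bs v]) auto
    then show "bounded_into_Bv0 v X N T"
      using A XHD linear_on_HD_image[OF T] bound_iff
      unfolding bounded_into_Bv0_def Bv0_def by blast
  qed
qed

theorem theorem2p2:
  fixes v :: "complex \<Rightarrow> real"
    and T :: "(complex \<Rightarrow> complex) \<Rightarrow> (complex \<Rightarrow> complex)"
    and X :: "(complex \<Rightarrow> complex) set"
    and N :: "(complex \<Rightarrow> complex) \<Rightarrow> real"
  assumes "typical_weight v"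
    and "linear_on_HD T"
    and "banach_subspace X N"
  shows "(bounded_into_Hv0 v X N T \<longleftrightarrow>
           (\<forall>z\<in>disk. in_dual X N (\<lambda>f. T f z)) \<and>
           (\<forall>f\<in>X. vanishes_at_boundary (\<lambda>z. v z * norm (T f z)))) \<and>
         (bounded_into_Bv0 v X N T \<longleftrightarrow>
           in_dual X N (\<lambda>f. T f 0) \<and>
           (\<forall>z\<in>disk. in_dual X N (\<lambda>f. deriv (T f) z)) \<and>
           (\<forall>f\<in>X. vanishes_at_boundary (\<lambda>z. v z * norm (deriv (T f) z))))"
  using bounded_into_Hv0_iff[OF assms] bounded_into_Bv0_iff[OF assms] by blast

end
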